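(* For every real $x$, \[ \frac{1}{\log(1+e^{-x})}<\psi^{-1}(x)<e^{x}+\frac{1}{2}. \] Equivalently, for every $x>0$, $\psi\!\left(\frac{1}{\log(1+1/x)}\right)<\log x<\psi\!\left(x+\frac12\right)$.
   Context: $\psi=\Gamma'/\Gamma$ is the digamma function, which is a strictly increasing bijection from $(0,\infty)$ onto $\mathbb{R}$; $\psi^{-1}:\mathbb{R}\to(0,\infty)$ denotes the inverse of this restriction. *)

theory Defs
  imports "HOL-Analysis.Analysis"
begin

definition inv_digamma :: "real \<Rightarrow> real" where
  "inv_digamma x = (THE y. y > 0 \<and> Digamma y = x)"

end

theory Submission
  imports Defs "HOL-Real_Asymp.Real_Asymp"
begin

text \<open>Both bounds are instances of one telescoping principle: if \<open>g (y + 1) < g y\<close> for all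
  \<open>y > 0\<close> and \<open>g y \<rightarrow> 0\<close> as \<open>y \<rightarrow> \<infinity>\<close>, then \<open>g > 0\<close> on \<open>(0, \<infinity>)\<close>.
  It is applied to \<open>\<psi>(y + 1/2) - ln y\<close> and to \<open>-ln (exp (1/y) - 1) - \<psi>(y)\<close>; the recurrence
  \<open>\<psi>(y + 1) = \<psi>(y) + 1/y\<close> reduces the step condition to an elementary inequality in \<open>1/y\<close>, and the
  limits follow from \<open>ln y - 1/y \<le> \<psi>(y) \<le> ln y\<close>. Since \<open>\<psi>\<close> is strictly increasing, the
  inequalities \<open>ln x < \<psi>(x + 1/2)\<close> and \<open>\<psi>(1 / ln (1 + 1/x)) < ln x\<close> locate \<open>\<psi>\<^sup>-\<^sup>1\<close>.\<close>

lemma ln_one_plus_gt: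
  fixes t :: real
  assumes "t > 0"
  shows "2 * t / (2 + t) < ln (1 + t)"
proof -
  let ?f = "\<lambda>x::real. ln (1 + x) - 2 * x / (2 + x)"
  have "?f 0 < ?f t"
  proof (rule DERIV_pos_imp_increasing_open[OF assms])
    fix x :: real
    assume x: "0 < x" "x < t"
    have "(?f has_real_derivative 1 / (1 + x) - 4 / (2 + x)\<^sup>2) (at x)"
      using x by (auto intro!: derivative_eq_intros simp: field_simps power2_eq_square)
    moreover have "4 * (1 + x) < (2 + x)\<^sup>2"
      using x by (simp add: power2_eq_square algebra_simps)
    then have "4 / (2 + x)\<^sup>2 < 1 / (1 + x)"
      using x by (simp add: divide_simps)
    ultimately show "\<exists>y. (?f has_real_derivative y) (at x) \<and> y > 0"
      by auto
  qed (intro continuous_intros, auto)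
  then show ?thesis
    by simp
qed

lemma two_ln_one_plus_lt:
  fixes a :: real
  assumes "a > 0"
  shows "2 * ln (1 + a) < a + a / (1 + a)"
proof -
  let ?f = "\<lambda>x::real. x + x / (1 + x) - 2 * ln (1 + x)"
  have "?f 0 < ?f a"
  proof (rule DERIV_pos_imp_increasing_open[OF assms])
    fix x :: real
    assume x: "0 < x" "x < a"
    have "(?f has_real_derivative 1 + ((1 + x) - x) / (1 + x)\<^sup>2 - 2 * (1 / (1 + x))) (at x)"
      using x by (auto intro!: derivative_eq_intros simp: power2_eq_square)
    moreover have "1 + ((1 + x) - x) / (1 + x)\<^sup>2 - 2 * (1 / (1 + x)) = (x / (1 + x))\<^sup>2"
      using x by (simp add: divide_simps power2_eq_square) (simp add: algebra_simps)
    ultimately have "(?f has_real_derivative (x / (1 + x))\<^sup>2) (at x)"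
      by simp
    then show "\<exists>y. (?f has_real_derivative y) (at x) \<and> y > 0"
      using x by auto
  qed (intro continuous_intros, auto)
  then show ?thesis
    by simp
qed

lemma exp_div_one_plus_plus_exp_minus_gt:
  fixes a :: real
  assumes "a > 0"
  shows "2 < exp (a / (1 + a)) + exp (- a)"
proof -
  let ?f = "\<lambda>x::real. exp (x / (1 + x)) + exp (- x)"
  have "?f 0 < ?f a"
  proof (rule DERIV_pos_imp_increasing_open[OF assms])
    fix x :: real
    assume x: "0 < x" "x < a"
    have deriv: "(?f has_real_derivative exp (x / (1 + x)) / (1 + x)\<^sup>2 - exp (- x)) (at x)"
      using x by (auto intro!: derivative_eq_intros simp: field_simps power2_eq_square)
    have "(1 + x)\<^sup>2 = exp (2 * ln (1 + x))"
      using ln_realpow[of "1 + x" 2] x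
      by (metis exp_ln add_pos_pos zero_less_one zero_less_power of_nat_numeral)
    also have "\<dots> < exp (x + x / (1 + x))"
      using two_ln_one_plus_lt[OF x(1)] by simp
    also have "\<dots> = exp x * exp (x / (1 + x))"
      by (simp add: exp_add)
    finally have "(1 + x)\<^sup>2 * exp (- x) < exp (x / (1 + x))"
      by (simp add: exp_minus field_simps)
    then have "exp (- x) < exp (x / (1 + x)) / (1 + x)\<^sup>2"
      using x by (simp add: field_simps)
    then have "exp (x / (1 + x)) / (1 + x)\<^sup>2 - exp (- x) > 0"
      by simp
    with deriv show "\<exists>y. (?f has_real_derivative y) (at x) \<and> y > 0"
      by blast
  qed (intro continuous_intros, auto)
  then show ?thesis
    by simp
qed

lemma ln_one_plus_inverse:
  fixes y :: real
  assumes "y > 0"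
  shows "ln (1 + 1 / y) = ln (y + 1) - ln y"
proof -
  have "1 + 1 / y = (y + 1) / y"
    using assms by (simp add: field_simps)
  then show ?thesis
    using assms by (simp add: ln_div)
qed

lemma ln_add_one_minus_ln_le:
  fixes y :: real
  assumes "y > 0"
  shows "ln (y + 1) - ln y \<le> 1 / y"
proof -
  have "ln (y + 1) - ln y = ln (1 + 1 / y)"
    using assms by (simp add: ln_one_plus_inverse)
  also have "\<dots> \<le> 1 / y"
    using assms by (intro ln_add_one_self_le_self) simp
  finally show ?thesis .
qed

lemma inverse_add_one_le_ln_add_one_minus_ln:
  fixes y :: real
  assumes "y > 0"
  shows "1 / (y + 1) \<le> ln (y + 1) - ln y"
proof -
  have "1 + (- 1 / (y + 1)) = y / (y + 1)"
    using assms by (simp add: field_simps)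
  then have "ln y - ln (y + 1) = ln (1 + (- 1 / (y + 1)))"
    using assms by (simp add: ln_div)
  also have "\<dots> \<le> - 1 / (y + 1)"
    using assms by (intro ln_le_minus_one[THEN order_trans]) (auto simp: field_simps)
  finally show ?thesis
    by simp
qed

lemma ln_diff_le_sum_inverse:
  fixes z :: real
  assumes "z > 0"
  shows "ln (z + real m) - ln z \<le> (\<Sum>n<m. inverse (z + real n))"
proof (induction m)
  case (Suc m)
  have "ln (z + real m + 1) - ln (z + real m) \<le> 1 / (z + real m)"
    using assms by (intro ln_add_one_minus_ln_le) simp
  with Suc show ?case
    by (simp add: inverse_eq_divide add_ac)
qed simp

lemma sum_inverse_le_ln_diff:
  fixes z :: real
  assumes "z > 0"
  shows "(\<Sum>n<Suc m. inverse (z + real n)) \<le> 1 / z + ln (z + real m) - ln z"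
proof (induction m)
  case (Suc m)
  have "1 / (z + real m + 1) \<le> ln (z + real m + 1) - ln (z + real m)"
    using assms by (intro inverse_add_one_le_ln_add_one_minus_ln) simp
  with Suc show ?case
    by (simp add: inverse_eq_divide add_ac)
qed (simp add: inverse_eq_divide)

lemma Digamma_le_ln:
  fixes z :: real
  assumes "z > 0"
  shows "Digamma z \<le> ln z"
proof (rule LIMSEQ_le)
  show "(\<lambda>m. ln (real m) - (\<Sum>n<m. inverse (z + real n))) \<longlonglongrightarrow> Digamma z"
    using Digamma_LIMSEQ[of z] assms by simp
  show "(\<lambda>m. ln (real m) - ln (z + real m) + ln z) \<longlonglongrightarrow> ln z"
    using assms by real_asymp
  show "\<exists>N. \<forall>m\<ge>N. ln (real m) - (\<Sum>n<m. inverse (z + real n))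
                    \<le> ln (real m) - ln (z + real m) + ln z"
    using ln_diff_le_sum_inverse[OF assms] by (auto simp: algebra_simps)
qed

lemma ln_minus_inverse_le_Digamma:
  fixes z :: real
  assumes "z > 0"
  shows "ln z - 1 / z \<le> Digamma z"
proof (rule LIMSEQ_le)
  show "(\<lambda>m. ln (real m) - ln (z + real m) + ln z - 1 / z) \<longlonglongrightarrow> ln z - 1 / z"
    using assms by real_asymp
  show "(\<lambda>m. ln (real (Suc m)) - (\<Sum>n<Suc m. inverse (z + real n))) \<longlonglongrightarrow> Digamma z"
    using LIMSEQ_Suc[OF Digamma_LIMSEQ[of z]] assms by simp
  have "ln (real m) \<le> ln (real (Suc m))" for m
    by (cases "m = 0") auto
  then have "ln (real m) - ln (z + real m) + ln z - 1 / z
               \<le> ln (real (Suc m)) - (\<Sum>n<Suc m. inverse (z + real n))" for m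
    using sum_inverse_le_ln_diff[OF assms, of m] by (smt (verit))
  then show "\<exists>N. \<forall>m\<ge>N. ln (real m) - ln (z + real m) + ln z - 1 / z
                    \<le> ln (real (Suc m)) - (\<Sum>n<Suc m. inverse (z + real n))"
    by blast
qed

lemma tendsto_Digamma_minus_ln_at_top: "((\<lambda>z::real. Digamma z - ln z) \<longlongrightarrow> 0) at_top"
proof (rule tendsto_sandwich)
  show "\<forall>\<^sub>F z in at_top. - 1 / z \<le> Digamma z - ln (z::real)"
    using eventually_gt_at_top[of 0] by eventually_elim (use ln_minus_inverse_le_Digamma in force)
  show "\<forall>\<^sub>F z in at_top. Digamma z - ln (z::real) \<le> 0"
    using eventually_gt_at_top[of 0] by eventually_elim (use Digamma_le_ln in force)
qed real_asymp+

lemma pos_if_shift_decreasing_and_tendsto_0: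
  fixes g :: "real \<Rightarrow> real"
  assumes step: "\<And>y. y > 0 \<Longrightarrow> g (y + 1) < g y"
    and lim: "(g \<longlongrightarrow> 0) at_top"
    and "x > 0"
  shows "g x > 0"
proof -
  have "decseq (\<lambda>n. g (x + real n))"
  proof (rule decseq_SucI)
    fix n
    have "g (x + real n + 1) < g (x + real n)"
      using \<open>x > 0\<close> by (intro step) simp
    then show "g (x + real (Suc n)) \<le> g (x + real n)"
      by (simp add: add_ac)
  qed
  moreover have "(\<lambda>n. g (x + real n)) \<longlonglongrightarrow> 0"
    by (rule filterlim_compose[OF lim]) real_asymp
  ultimately have "0 \<le> g (x + 1)"
    using decseq_ge[of "\<lambda>n. g (x + real n)" 0 1] by simp
  with step[OF \<open>x > 0\<close>] show ?thesis
    by simp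
qed

lemma ln_less_Digamma_plus_half:
  fixes x :: real
  assumes "x > 0"
  shows "ln x < Digamma (x + 1 / 2)"
proof -
  define g where "g y = Digamma (y + 1 / 2) - ln y" for y :: real
  have "g x > 0"
  proof (rule pos_if_shift_decreasing_and_tendsto_0[OF _ _ assms])
    fix y :: real
    assume y: "y > 0"
    have "Digamma (y + 1 + 1 / 2) = Digamma (y + 1 / 2) + 1 / (y + 1 / 2)"
      using Digamma_plus1[of "y + 1 / 2"] y by (simp add: add_ac)
    moreover have "1 / (y + 1 / 2) = 2 * (1 / y) / (2 + 1 / y)"
      using y by (simp add: field_simps)
    ultimately show "g (y + 1) < g y"
      using ln_one_plus_gt[of "1 / y"] ln_one_plus_inverse[OF y] y by (simp add: g_def)
  next
    have "((\<lambda>y::real. Digamma (y + 1 / 2) - ln (y + 1 / 2)) \<longlongrightarrow> 0) at_top"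
      by (rule filterlim_compose[OF tendsto_Digamma_minus_ln_at_top]) real_asymp
    moreover have "((\<lambda>y::real. ln (y + 1 / 2) - ln y) \<longlongrightarrow> 0) at_top"
      by real_asymp
    ultimately have "((\<lambda>y::real. (Digamma (y + 1 / 2) - ln (y + 1 / 2)) + (ln (y + 1 / 2) - ln y))
                       \<longlongrightarrow> 0 + 0) at_top"
      by (rule tendsto_add)
    then show "(g \<longlongrightarrow> 0) at_top"
      by (simp add: g_def [abs_def])
  qed
  then show ?thesis
    by (simp add: g_def)
qed

lemma Digamma_less_minus_ln_exp_inverse_minus_one:
  fixes x :: real
  assumes "x > 0"
  shows "Digamma x < - ln (exp (1 / x) - 1)"
proof -
  define h where "h y = - ln (exp (1 / y) - 1) - Digamma y" for y :: real
  have "h x > 0"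
  proof (rule pos_if_shift_decreasing_and_tendsto_0[OF _ _ assms])
    fix y :: real
    assume y: "y > 0"
    define a where "a = 1 / y"
    have a: "a > 0" and "1 / (y + 1) = a / (1 + a)"
      using y by (simp_all add: a_def field_simps)
    moreover have "Digamma (y + 1) = Digamma y + a"
      using Digamma_plus1[of y] y by (simp add: a_def)
    moreover have "ln (exp a - 1) < ln (exp (a / (1 + a)) - 1) + a"
    proof -
      have "exp a - 1 < (exp (a / (1 + a)) - 1) * exp a"
        using exp_div_one_plus_plus_exp_minus_gt[OF a] by (simp add: exp_minus field_simps)
      then have "ln (exp a - 1) < ln ((exp (a / (1 + a)) - 1) * exp a)"
        using a by (subst ln_less_cancel_iff) auto
      also have "\<dots> = ln (exp (a / (1 + a)) - 1) + a"
        using a by (simp add: ln_mult)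
      finally show ?thesis .
    qed
    ultimately show "h (y + 1) < h y"
      by (simp add: h_def a_def)
  next
    have "((\<lambda>y::real. (- ln (exp (1 / y) - 1) - ln y) + (ln y - Digamma y)) \<longlongrightarrow> 0 + - 0) at_top"
      using tendsto_minus[OF tendsto_Digamma_minus_ln_at_top]
      by (intro tendsto_add) (real_asymp, simp)
    then show "(h \<longlongrightarrow> 0) at_top"
      by (simp add: h_def [abs_def])
  qed
  then show ?thesis
    by (simp add: h_def)
qed

lemma Digamma_real_less_iff:
  fixes a b :: real
  assumes "a > 0" "b > 0"
  shows "Digamma a < Digamma b \<longleftrightarrow> a < b"
  using assms Digamma_real_mono Digamma_real_strict_mono by (metis not_le)

lemma inv_digamma:
  fixes x :: real
  shows "inv_digamma x > 0" and "Digamma (inv_digamma x) = x"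
proof -
  define a where "a = exp x"
  define b where "b = exp (\<bar>x\<bar> + 1)"
  have "a > 0" "b \<ge> 1" "a \<le> b"
    by (auto simp: a_def b_def)
  have "Digamma a \<le> x"
    using Digamma_le_ln[OF \<open>a > 0\<close>] by (simp add: a_def)
  moreover have "x \<le> Digamma b"
  proof -
    have "ln b - 1 / b \<le> Digamma b" and "1 / b \<le> 1"
      using ln_minus_inverse_le_Digamma[of b] \<open>b \<ge> 1\<close> by simp_all
    moreover have "ln b = \<bar>x\<bar> + 1"
      by (simp add: b_def)
    ultimately show ?thesis
      by linarith
  qed
  moreover have "continuous_on {a..b} (Digamma :: real \<Rightarrow> real)"
    using \<open>a > 0\<close> by (intro continuous_on_Polygamma) (auto elim!: nonpos_Ints_cases)
  ultimately obtain y where "a \<le> y" "Digamma y = x"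
    using IVT'[of Digamma a x b] \<open>a \<le> b\<close> by blast
  with \<open>a > 0\<close> have "\<exists>!y. y > 0 \<and> Digamma y = x"
    by (metis Digamma_real_less_iff linorder_neq_iff order.strict_trans2 less_irrefl)
  then have "inv_digamma x > 0 \<and> Digamma (inv_digamma x) = x"
    unfolding inv_digamma_def by (rule theI')
  then show "inv_digamma x > 0" and "Digamma (inv_digamma x) = x"
    by auto
qed

theorem theorem2p2:
  fixes x :: real
  shows "1 / ln (1 + exp (- x)) < inv_digamma x \<and> inv_digamma x < exp x + 1 / 2"
proof
  define u where "u = 1 / ln (1 + exp (- x))"
  have "u > 0"
    by (simp add: u_def ln_gt_zero)
  have "Digamma u < - ln (exp (1 / u) - 1)"
    using Digamma_less_minus_ln_exp_inverse_minus_one[OF \<open>u > 0\<close>] .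
  also have "\<dots> = Digamma (inv_digamma x)"
    by (simp add: u_def inv_digamma add_pos_pos)
  finally show "1 / ln (1 + exp (- x)) < inv_digamma x"
    using \<open>u > 0\<close> inv_digamma(1) by (simp add: Digamma_real_less_iff u_def)
next
  have "Digamma (inv_digamma x) = ln (exp x)"
    by (simp add: inv_digamma)
  also have "\<dots> < Digamma (exp x + 1 / 2)"
    by (rule ln_less_Digamma_plus_half) simp
  finally show "inv_digamma x < exp x + 1 / 2"
    using inv_digamma(1) by (simp add: Digamma_real_less_iff add_pos_pos)
qed

end
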